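(* Let $(X,d)$ be a compact metric space with the $E_{1,0}$-property. Then the intrinsic distance $d_I:X\times X\to\mathbb{R}$ is well defined (finite-valued) and continuous.
   Context: $(X,d)$ has the $E_{1,0}$-property if for every nonempty open $\Omega\subsetneq X$ there is a continuous $u:\overline\Omega\to\mathbb{R}$ with $s[u](x)=1$ for all $x\in\Omega$ and $u=0$ on $\partial\Omega$, where the local slope is $s[u](\bar x):=\limsup_{x\to\bar x}\frac{\max\{u(\bar x)-u(x),0\}}{d(\bar x,x)}$ (zero if $\bar x$ isolated), computed in $\overline\Omega$. The intrinsic distance $d_I(x,y)$ is the infimum of lengths of continuous curves joining $x$ and $y$ (length $=\sup\sum_i d(\gamma(t_i),\gamma(t_{i+1}))$ over partitions), with $\inf\emptyset=+\infty$. *)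

theory Defs
  imports "HOL-Analysis.Analysis" "HOL-Library.Liminf_Limsup"
begin

definition local_slope :: "'a::metric_space set \<Rightarrow> ('a \<Rightarrow> real) \<Rightarrow> 'a \<Rightarrow> ereal" where
  "local_slope S u xb =
     (if at xb within S = bot then 0
      else Limsup (at xb within S) (\<lambda>x. ereal (max (u xb - u x) 0 / dist xb x)))"

definition E10_property :: "'a::metric_space itself \<Rightarrow> bool" where
  "E10_property TYPE('a) \<longleftrightarrow>
     (\<forall>\<Omega> :: 'a set. open \<Omega> \<and> \<Omega> \<noteq> {} \<and> \<Omega> \<noteq> UNIV \<longrightarrow>
        (\<exists>u :: 'a \<Rightarrow> real. continuous_on (closure \<Omega>) u \<and>
            (\<forall>x\<in>\<Omega>. local_slope (closure \<Omega>) u x = 1) \<and>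
            (\<forall>x\<in>frontier \<Omega>. u x = 0)))"

definition curve_length :: "(real \<Rightarrow> 'a::metric_space) \<Rightarrow> ereal" where
  "curve_length g =
     (SUP (n, t) \<in> {(n :: nat, t :: nat \<Rightarrow> real).
                     t 0 = 0 \<and> t n = 1 \<and> (\<forall>i<n. t i \<le> t (Suc i))}.
        ereal (\<Sum>i<n. dist (g (t i)) (g (t (Suc i)))))"

text \<open>Intrinsic distance; Inf of the empty set is +infinity.\<close>
definition intrinsic_dist :: "'a::metric_space \<Rightarrow> 'a \<Rightarrow> ereal" where
  "intrinsic_dist x y =
     (INF g \<in> {g :: real \<Rightarrow> 'a. continuous_on {0..1} g \<and> g 0 = x \<and> g 1 = y}.
        curve_length g)"

end

theory Submission
  imports Defs
begin

text \<open>
  Fix \<open>x\<close>. Since \<open>x\<close> is not isolated, the \<open>E\<^sub>1\<^sub>,\<^sub>0\<close>-property for \<open>X - {x}\<close> yields a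
  continuous \<open>u\<close> with \<open>u x = 0\<close> and local slope \<open>1\<close> at every other point; in particular
  \<open>u\<close> attains its minimum only at \<open>x\<close>. Call \<open>q\<close> a steep descent from \<open>p\<close> if
  \<open>d p q \<le> 2 (u p - u q)\<close>. Among the steep descents from \<open>p\<close> staying at or above a level
  \<open>c \<le> u p\<close>, a minimiser of \<open>u\<close> lies exactly on level \<open>c\<close>, since otherwise its slope
  \<open>1 > 1/2\<close> would allow a further steep descent. Chaining finitely many levels and passing to
  the limit by compactness of the function space \<open>\<real> \<Rightarrow> X\<close> gives a 2-Lipschitz curve,
  parametrised by the value of \<open>u\<close>, from any \<open>a\<close> down to \<open>x\<close>. Hence
  \<open>d\<^sub>I a b \<le> 2 (u a + u b)\<close>: \<open>d\<^sub>I\<close> is finite, and since the bound vanishes as \<open>a, b \<rightarrow> x\<close>,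
  the triangle inequality for \<open>d\<^sub>I\<close> makes it continuous.
\<close>

section \<open>Length of curves\<close>

lemma partition_point_in_unit_interval:
  assumes "t 0 = 0" "t n = 1" "\<forall>i<n. t i \<le> t (Suc i)" "i \<le> n"
  shows "t i \<in> {0..(1::real)}"
proof -
  have "{0..<i} \<subseteq> {..<n}" "{i..<n} \<subseteq> {..<n}"
    using assms(4) by auto
  then show ?thesis
    using lift_Suc_mono_le_ivl[of "{..<n}" t 0 i] lift_Suc_mono_le_ivl[of "{..<n}" t i n] assms
    by auto
qed

lemma partition_sum_le_curve_length:
  assumes "t 0 = 0" "t n = 1" "\<forall>i<n. t i \<le> t (Suc i)"
  shows "ereal (\<Sum>i<n. dist (g (t i)) (g (t (Suc i)))) \<le> curve_length g"
  unfolding curve_length_def by (rule SUP_upper2[where i="(n, t)"]) (use assms in auto)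

lemma curve_length_nonneg: "0 \<le> curve_length g"
proof -
  have "ereal (\<Sum>i<1. dist (g (real i)) (g (real (Suc i)))) \<le> curve_length g"
    by (rule partition_sum_le_curve_length) auto
  then have "ereal (dist (g 0) (g 1)) \<le> curve_length g"
    by simp
  then show ?thesis
    by (rule order_trans[rotated]) simp
qed

lemma curve_length_le_lipschitz:
  assumes "L-lipschitz_on {0..1} g"
  shows "curve_length g \<le> ereal L"
  unfolding curve_length_def
proof (rule SUP_least, clarify)
  fix n and t :: "nat \<Rightarrow> real"
  assume t: "t 0 = 0" "t n = 1" and mono: "\<forall>i<n. t i \<le> t (Suc i)"
  have "(\<Sum>i<n. dist (g (t i)) (g (t (Suc i)))) \<le> (\<Sum>i<n. L * (t (Suc i) - t i))"
  proof (rule sum_mono)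
    fix i assume "i \<in> {..<n}"
    then have "t i \<in> {0..1}" "t (Suc i) \<in> {0..1}" "t i \<le> t (Suc i)"
      using partition_point_in_unit_interval[OF t mono] mono by auto
    then show "dist (g (t i)) (g (t (Suc i))) \<le> L * (t (Suc i) - t i)"
      using lipschitz_onD[OF assms] by (fastforce simp: dist_real_def)
  qed
  also have "\<dots> = L"
    using t by (simp add: sum_distrib_left[symmetric] sum_lessThan_telescope)
  finally show "ereal (\<Sum>i<n. dist (g (t i)) (g (t (Suc i)))) \<le> ereal L"
    by simp
qed

lemma partition_crossing_index:
  fixes t :: "nat \<Rightarrow> real"
  assumes "t 0 = 0" "t n = 1" "\<forall>i<n. t i \<le> t (Suc i)" "0 \<le> a" "a < 1"
  obtains k where "k < n" "\<And>i. i \<le> k \<Longrightarrow> t i \<le> a" "\<And>i. Suc k \<le> i \<Longrightarrow> i \<le> n \<Longrightarrow> a < t i"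
proof
  define k where "k = (LEAST i. a < t (Suc i))"
  have "n \<noteq> 0"
    using assms(1,2) by (metis zero_neq_one)
  then have "a < t (Suc (n - 1))"
    using assms(2,5) by simp
  have "k \<le> n - 1"
    unfolding k_def by (rule Least_le) fact
  then show "k < n"
    using \<open>n \<noteq> 0\<close> by simp
  show "t i \<le> a" if "i \<le> k" for i
  proof (cases i)
    case 0 then show ?thesis using assms by simp
  next
    case (Suc j)
    then show ?thesis using that not_less_Least[of j "\<lambda>i. a < t (Suc i)"] by (simp add: k_def)
  qed
  show "a < t i" if "Suc k \<le> i" "i \<le> n" for i
  proof -
    have "a < t (Suc k)"
      unfolding k_def by (rule LeastI) fact
    also have "t (Suc k) \<le> t i"
      by (rule lift_Suc_mono_le_ivl[of "{..<n}"]) (use assms(3) that in auto)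
    finally show ?thesis .
  qed
qed

lemma curve_length_joinpaths_le:
  assumes "g1 1 = g2 0"
  shows "curve_length (g1 +++ g2) \<le> curve_length g1 + curve_length g2"
  unfolding curve_length_def[of "g1 +++ g2"]
proof (rule SUP_least, clarify)
  fix n and t :: "nat \<Rightarrow> real"
  assume t: "t 0 = 0" "t n = 1" and mono: "\<forall>i<n. t i \<le> t (Suc i)"
  txt \<open>Cut the partition at the interval containing \<open>1/2\<close>, which is split through
    \<open>g1 1 = g2 0\<close>; the two halves, rescaled, are partitions for \<open>g1\<close> and \<open>g2\<close>.\<close>
  obtain k where "k < n" and low: "\<And>i. i \<le> k \<Longrightarrow> t i \<le> 1/2"
    and high: "\<And>i. Suc k \<le> i \<Longrightarrow> i \<le> n \<Longrightarrow> 1/2 < t i"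
    using partition_crossing_index[OF t mono, of "1/2"] by auto
  define m where "m = n - Suc k"
  have n: "n = Suc k + m"
    using \<open>k < n\<close> by (simp add: m_def)
  define F where "F i = dist ((g1 +++ g2) (t i)) ((g1 +++ g2) (t (Suc i)))" for i
  define s1 where "s1 i = (if i \<le> k then 2 * t i else 1)" for i
  define s2 where "s2 j = (if j = 0 then 0 else 2 * t (k + j) - 1)" for j
  let ?\<Sigma>1 = "\<Sum>i<Suc k. dist (g1 (s1 i)) (g1 (s1 (Suc i)))"
  let ?\<Sigma>2 = "\<Sum>j<Suc m. dist (g2 (s2 j)) (g2 (s2 (Suc j)))"
  have \<Sigma>1_le: "ereal ?\<Sigma>1 \<le> curve_length g1"
  proof (rule partition_sum_le_curve_length)
    show "\<forall>i<Suc k. s1 i \<le> s1 (Suc i)"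
    proof (intro allI impI)
      fix i assume "i < Suc k"
      then show "s1 i \<le> s1 (Suc i)"
        using mono \<open>k < n\<close> low[of i] by (auto simp: s1_def)
    qed
  qed (use t in \<open>auto simp: s1_def\<close>)
  have \<Sigma>2_le: "ereal ?\<Sigma>2 \<le> curve_length g2"
  proof (rule partition_sum_le_curve_length)
    show "\<forall>j<Suc m. s2 j \<le> s2 (Suc j)"
      using mono high[of "Suc k"] n by (auto simp: s2_def)
  qed (use t n in \<open>auto simp: s2_def\<close>)
  have "(\<Sum>i<n. F i) \<le> ?\<Sigma>1 + ?\<Sigma>2"
  proof -
    have split: "(\<Sum>i<n. F i) = (\<Sum>i<k. F i) + F k + (\<Sum>j<m. F (Suc k + j))"
      unfolding n by (induction m) simp_all
    have "(\<Sum>i<k. F i) = (\<Sum>i<k. dist (g1 (s1 i)) (g1 (s1 (Suc i))))"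
      using low by (intro sum.cong) (auto simp: F_def s1_def joinpaths_def)
    then have \<Sigma>1: "?\<Sigma>1 = (\<Sum>i<k. F i) + dist (g1 (2 * t k)) (g1 1)"
      by (simp add: s1_def)
    have "(\<Sum>j<m. F (Suc k + j)) = (\<Sum>j<m. dist (g2 (s2 (Suc j))) (g2 (s2 (Suc (Suc j)))))"
    proof (rule sum.cong)
      fix j assume "j \<in> {..<m}"
      then have "1/2 < t (Suc k + j)" "1/2 < t (Suc (Suc k + j))"
        using high n by auto
      then show "F (Suc k + j) = dist (g2 (s2 (Suc j))) (g2 (s2 (Suc (Suc j))))"
        by (simp add: F_def s2_def joinpaths_def)
    qed simp
    then have \<Sigma>2: "?\<Sigma>2 = dist (g2 0) (g2 (2 * t (Suc k) - 1)) + (\<Sum>j<m. F (Suc k + j))"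
      unfolding sum.lessThan_Suc_shift by (simp add: s2_def del: sum.lessThan_Suc)
    have "F k = dist (g1 (2 * t k)) (g2 (2 * t (Suc k) - 1))"
      using low[of k] high[of "Suc k"] \<open>k < n\<close> by (simp add: F_def joinpaths_def)
    also have "\<dots> \<le> dist (g1 (2 * t k)) (g1 1) + dist (g2 0) (g2 (2 * t (Suc k) - 1))"
      using dist_triangle[of _ _ "g1 1"] assms by simp
    finally show ?thesis
      unfolding split \<Sigma>1 \<Sigma>2 by simp
  qed
  then have "ereal (\<Sum>i<n. F i) \<le> ereal ?\<Sigma>1 + ereal ?\<Sigma>2"
    by simp
  also have "\<dots> \<le> curve_length g1 + curve_length g2"
    using \<Sigma>1_le \<Sigma>2_le by (rule add_mono)
  finally show "ereal (\<Sum>i<n. dist ((g1 +++ g2) (t i)) ((g1 +++ g2) (t (Suc i))))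
      \<le> curve_length g1 + curve_length g2"
    by (simp add: F_def)
qed

section \<open>Intrinsic distance\<close>

lemma intrinsic_dist_le_curve_length:
  "continuous_on {0..1} g \<Longrightarrow> intrinsic_dist (g 0) (g 1) \<le> curve_length g"
  unfolding intrinsic_dist_def by (rule INF_lower) auto

lemma intrinsic_dist_nonneg: "0 \<le> intrinsic_dist a b"
  unfolding intrinsic_dist_def by (rule INF_greatest) (rule curve_length_nonneg)

lemma intrinsic_dist_le_lipschitz_arc:
  fixes f :: "real \<Rightarrow> 'a::metric_space"
  assumes "L-lipschitz_on {\<alpha>..\<beta>} f" "\<alpha> \<le> \<beta>"
  shows "intrinsic_dist (f \<alpha>) (f \<beta>) \<le> L * (\<beta> - \<alpha>)"
    and "intrinsic_dist (f \<beta>) (f \<alpha>) \<le> L * (\<beta> - \<alpha>)"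
proof -
  have arc: "intrinsic_dist (f (\<phi> 0)) (f (\<phi> 1)) \<le> L * (\<beta> - \<alpha>)"
    if "(\<beta> - \<alpha>)-lipschitz_on {0..1} \<phi>" "\<phi> ` {0..1} \<subseteq> {\<alpha>..\<beta>}" for \<phi> :: "real \<Rightarrow> real"
  proof -
    have lip: "(L * (\<beta> - \<alpha>))-lipschitz_on {0..1} (\<lambda>s. f (\<phi> s))"
      using lipschitz_on_subset[OF assms(1) that(2)] that(1) by (rule lipschitz_on_compose2[rotated])
    have "intrinsic_dist (f (\<phi> 0)) (f (\<phi> 1)) \<le> curve_length (\<lambda>s. f (\<phi> s))"
      using intrinsic_dist_le_curve_length[of "\<lambda>s. f (\<phi> s)"] lipschitz_on_continuous_on[OF lip]
      by simp
    also have "\<dots> \<le> L * (\<beta> - \<alpha>)"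
      using curve_length_le_lipschitz[OF lip] .
    finally show ?thesis .
  qed
  have scaled: "\<alpha> + s * (\<beta> - \<alpha>) \<in> {\<alpha>..\<beta>}" "\<beta> - s * (\<beta> - \<alpha>) \<in> {\<alpha>..\<beta>}"
    if "s \<in> {0..1}" for s
    using that assms(2) mult_left_le_one_le[of "\<beta> - \<alpha>" s] by auto
  have "(\<beta> - \<alpha>)-lipschitz_on {0..1} (\<lambda>s. \<alpha> + s * (\<beta> - \<alpha>))"
    using assms(2) by (intro lipschitz_onI) (simp_all add: dist_real_def abs_mult left_diff_distrib[symmetric])
  moreover have "(\<lambda>s. \<alpha> + s * (\<beta> - \<alpha>)) ` {0..1} \<subseteq> {\<alpha>..\<beta>}"
    using scaled by blast
  ultimately show "intrinsic_dist (f \<alpha>) (f \<beta>) \<le> L * (\<beta> - \<alpha>)"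
    using arc[of "\<lambda>s. \<alpha> + s * (\<beta> - \<alpha>)"] by simp
  have "(\<beta> - \<alpha>)-lipschitz_on {0..1} (\<lambda>s. \<beta> - s * (\<beta> - \<alpha>))"
    using assms(2) by (intro lipschitz_onI)
      (simp_all add: dist_real_def abs_mult left_diff_distrib[symmetric] abs_minus_commute)
  moreover have "(\<lambda>s. \<beta> - s * (\<beta> - \<alpha>)) ` {0..1} \<subseteq> {\<alpha>..\<beta>}"
    using scaled by blast
  ultimately show "intrinsic_dist (f \<beta>) (f \<alpha>) \<le> L * (\<beta> - \<alpha>)"
    using arc[of "\<lambda>s. \<beta> - s * (\<beta> - \<alpha>)"] by simp
qed

lemma intrinsic_dist_self: "intrinsic_dist a a = 0"
proof -
  have "0-lipschitz_on {0..0} (\<lambda>_::real. a)"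
    by (simp add: lipschitz_on_def)
  then have "intrinsic_dist a a \<le> 0"
    using intrinsic_dist_le_lipschitz_arc(1)[of 0 0 0 "\<lambda>_. a"] by (simp add: zero_ereal_def)
  then show ?thesis
    using intrinsic_dist_nonneg[of a a] by simp
qed

lemma intrinsic_dist_triangle: "intrinsic_dist a c \<le> intrinsic_dist a b + intrinsic_dist b c"
proof (cases "intrinsic_dist a b = \<infinity> \<or> intrinsic_dist b c = \<infinity>")
  case True
  then show ?thesis
    using intrinsic_dist_nonneg[of a b] intrinsic_dist_nonneg[of b c] by auto
next
  case False
  then obtain dab dbc where dab: "intrinsic_dist a b = ereal dab" and dbc: "intrinsic_dist b c = ereal dbc"
    using intrinsic_dist_nonneg[of a b] intrinsic_dist_nonneg[of b c]
    by (cases "intrinsic_dist a b"; cases "intrinsic_dist b c") auto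
  show ?thesis
  proof (rule ereal_le_epsilon2, unfold dab dbc)
    fix e :: real assume "0 < e"
    have "\<exists>g. continuous_on {0..1} g \<and> g 0 = p \<and> g 1 = q \<and> curve_length g < ereal (d + e/2)"
      if "intrinsic_dist p q = ereal d" for p q :: 'a and d
    proof -
      have "(INF g\<in>{g. continuous_on {0..1} g \<and> g 0 = p \<and> g 1 = q}. curve_length g) < ereal (d + e/2)"
        using that \<open>0 < e\<close> by (simp add: intrinsic_dist_def)
      then show ?thesis
        by (auto simp: INF_less_iff)
    qed
    then obtain g1 g2 where g1: "continuous_on {0..1} g1" "g1 0 = a" "g1 1 = b"
        "curve_length g1 < ereal (dab + e/2)"
      and g2: "continuous_on {0..1} g2" "g2 0 = b" "g2 1 = c" "curve_length g2 < ereal (dbc + e/2)"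
      using dab dbc by blast
    have "continuous_on {0..1} (g1 +++ g2)"
      using g1 g2 path_join[of g1 g2] by (simp add: path_def pathstart_def pathfinish_def)
    then have "intrinsic_dist a c \<le> curve_length (g1 +++ g2)"
      using intrinsic_dist_le_curve_length g1 g2 by (fastforce simp: joinpaths_def)
    also have "\<dots> \<le> curve_length g1 + curve_length g2"
      using g1 g2 by (intro curve_length_joinpaths_le) simp
    also have "\<dots> \<le> ereal (dab + e/2) + ereal (dbc + e/2)"
      using g1 g2 by (intro add_mono) auto
    finally show "intrinsic_dist a c \<le> ereal dab + ereal dbc + ereal e"
      by (simp add: ac_simps)
  qed
qed

lemma continuous_on_of_triangle_ineq:
  fixes D :: "'a::metric_space \<Rightarrow> 'a \<Rightarrow> real"
  assumes nonneg: "\<And>a b. 0 \<le> D a b"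
    and triangle: "\<And>a b c. D a c \<le> D a b + D b c"
    and local_bound: "\<And>x. \<exists>v. isCont v x \<and> v x = 0 \<and> (\<forall>p. D p x \<le> v p \<and> D x p \<le> v p)"
  shows "continuous_on UNIV (\<lambda>z. D (fst z) (snd z))"
  unfolding continuous_on_eq_continuous_at[OF open_UNIV]
proof (clarify)
  fix x y :: 'a
  obtain v w where v: "isCont v x" "v x = 0" "\<And>p. D p x \<le> v p \<and> D x p \<le> v p"
    and w: "isCont w y" "w y = 0" "\<And>q. D q y \<le> w q \<and> D y q \<le> w q"
    using local_bound by metis
  have "isCont (\<lambda>z. v (fst z)) (x, y)" "isCont (\<lambda>z. w (snd z)) (x, y)"
    using isCont_o2[OF isCont_fst[OF continuous_ident], of "(x, y)" v]
      isCont_o2[OF isCont_snd[OF continuous_ident], of "(x, y)" w] v(1) w(1) by simp_all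
  then have "isCont (\<lambda>z. v (fst z) + w (snd z)) (x, y)"
    by (rule continuous_add)
  then have "((\<lambda>z. v (fst z) + w (snd z)) \<longlongrightarrow> 0) (at (x, y))"
    by (simp add: isCont_def v(2) w(2))
  from tendsto_mult_left[OF this, of 2]
  have vw_lim: "((\<lambda>z. 2 * (v (fst z) + w (snd z))) \<longlongrightarrow> 0) (at (x, y))"
    by simp
  have "\<forall>z. norm (D (fst z) (snd z) - D x y) \<le> 2 * (v (fst z) + w (snd z))"
  proof
    fix z :: "'a \<times> 'a"
    obtain p q where z: "z = (p, q)"
      by fastforce
    show "norm (D (fst z) (snd z) - D x y) \<le> 2 * (v (fst z) + w (snd z))"
      using triangle[of p q x] triangle[of x q y] triangle[of x y p] triangle[of p y q]
        v(3)[of p] w(3)[of q] nonneg[of x p] nonneg[of p x] nonneg[of y q] nonneg[of q y]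
      unfolding z real_norm_def abs_le_iff by simp
  qed
  then have "((\<lambda>z. D (fst z) (snd z) - D x y) \<longlongrightarrow> 0) (at (x, y))"
    using vw_lim by (rule Lim_null_comparison[OF always_eventually])
  then show "isCont (\<lambda>z. D (fst z) (snd z)) (x, y)"
    unfolding isCont_def fst_conv snd_conv by (rule LIM_zero_cancel)
qed

section \<open>Steep descent along functions of slope at least one\<close>

lemma frequently_descent_of_local_slope:
  fixes u :: "'a::metric_space \<Rightarrow> real"
  assumes "0 \<le> c" "ereal c < local_slope UNIV u b"
  shows "\<exists>\<^sub>F z in at b. c * dist b z < u b - u z"
proof (rule ccontr)
  assume "\<not> ?thesis"
  then have "\<forall>\<^sub>F z in at b. \<not> c * dist b z < u b - u z"
    by (simp add: not_frequently)
  then have "\<forall>\<^sub>F z in at b. ereal (max (u b - u z) 0 / dist b z) \<le> ereal c"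
    by eventually_elim (use \<open>0 \<le> c\<close> in \<open>auto simp: divide_le_eq mult.commute\<close>)
  then have "Limsup (at b) (\<lambda>z. ereal (max (u b - u z) 0 / dist b z)) \<le> ereal c"
    by (rule Limsup_bounded)
  with assms show False
    unfolding local_slope_def by (auto split: if_splits)
qed

lemma local_slope_pos_imp_ex_lower:
  fixes u :: "'a::metric_space \<Rightarrow> real"
  assumes "0 < local_slope UNIV u b"
  shows "\<exists>z. u z < u b"
proof -
  have "\<exists>\<^sub>F z in at b. 0 * dist b z < u b - u z"
    by (rule frequently_descent_of_local_slope) (use assms in \<open>auto simp: zero_ereal_def\<close>)
  then show ?thesis
    by (auto dest: frequently_ex)
qed

text \<open>The factor 2 is arbitrary: any factor above 1 beats a local slope of at least 1.\<close>

definition steep_descent :: "('a::metric_space \<Rightarrow> real) \<Rightarrow> 'a \<Rightarrow> 'a \<Rightarrow> bool" where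
  "steep_descent u p q \<longleftrightarrow> dist p q \<le> 2 * (u p - u q)"

lemma steep_descent_refl: "steep_descent u p p"
  by (simp add: steep_descent_def)

lemma steep_descent_trans: "steep_descent u p q \<Longrightarrow> steep_descent u q r \<Longrightarrow> steep_descent u p r"
  unfolding steep_descent_def using dist_triangle[of p r q] by (simp add: algebra_simps)

lemma steep_descent_level_eq: "steep_descent u p q \<Longrightarrow> u p = u q \<Longrightarrow> p = q"
  by (simp add: steep_descent_def)

lemma exists_steep_descent_to_level:
  fixes u :: "'a::metric_space \<Rightarrow> real"
  assumes "compact (UNIV :: 'a set)" "continuous_on UNIV u"
    and slope: "\<And>b. c < u b \<Longrightarrow> 1 \<le> local_slope UNIV u b"
    and "c \<le> u p"
  shows "\<exists>q. steep_descent u p q \<and> u q = c"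
proof -
  define K where "K = {q. dist p q \<le> 2 * (u p - u q) \<and> c \<le> u q}"
  have "closed K"
    unfolding K_def using assms(2)
    by (intro closed_Collect_conj closed_Collect_le continuous_intros) auto
  then have "compact K"
    using assms(1) compact_Int_closed by fastforce
  moreover have "p \<in> K"
    using assms(4) by (simp add: K_def)
  ultimately obtain b where "b \<in> K" and b_min: "\<And>y. y \<in> K \<Longrightarrow> u b \<le> u y"
    using continuous_attains_inf[of K u] continuous_on_subset[OF assms(2)] by blast
  then have pb: "steep_descent u p b" and "c \<le> u b"
    by (auto simp: K_def steep_descent_def)
  have "u b = c"
  proof (rule ccontr)
    assume "u b \<noteq> c"
    with \<open>c \<le> u b\<close> have "c < u b" by simp
    then have "\<forall>\<^sub>F z in at b. c < u z"
      using assms(2) by (metis UNIV_I continuous_on_def order_tendstoD(1))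
    moreover have "\<exists>\<^sub>F z in at b. 1/2 * dist b z < u b - u z"
      using order.strict_trans2[OF _ slope[OF \<open>c < u b\<close>], of "ereal (1/2)"]
      by (intro frequently_descent_of_local_slope) auto
    ultimately obtain z where "c < u z" and z: "1/2 * dist b z < u b - u z"
      using frequently_ex[OF frequently_eventually_conj] by blast
    then have "steep_descent u p z"
      using pb steep_descent_trans[of u p b z] by (simp add: steep_descent_def)
    with \<open>c < u z\<close> have "z \<in> K"
      by (simp add: K_def steep_descent_def)
    moreover have "u z < u b"
      using z zero_le_dist[of b z] by linarith
    ultimately show False
      using b_min by force
  qed
  with pb show ?thesis
    by blast
qed

lemma finite_steep_descent_chain:
  fixes u :: "'a::metric_space \<Rightarrow> real"
  assumes "compact (UNIV :: 'a set)" "continuous_on UNIV u"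
    and "\<And>b. c < u b \<Longrightarrow> 1 \<le> local_slope UNIV u b"
    and "finite L" "L \<subseteq> {c..u p}"
  shows "\<exists>f. \<forall>l\<in>L. u (f l) = l \<and> steep_descent u p (f l) \<and>
            (\<forall>l'\<in>L. l' \<le> l \<longrightarrow> steep_descent u (f l) (f l'))"
  using assms(4,5)
proof (induction L arbitrary: p rule: finite_linorder_max_induct)
  case empty
  then show ?case by simp
next
  case (insert l L)
  have "c \<le> l" "l \<le> u p" "L \<subseteq> {c..u p}" "\<And>l'. l' \<in> L \<Longrightarrow> l' < l"
    using insert.prems insert.hyps by auto
  then have "\<And>b. l < u b \<Longrightarrow> 1 \<le> local_slope UNIV u b"
    using assms(3) order.strict_trans1 by blast
  then obtain q where pq: "steep_descent u p q" and "u q = l"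
    using exists_steep_descent_to_level[OF assms(1,2)] \<open>l \<le> u p\<close> by blast
  have "L \<subseteq> {c..u q}"
    using \<open>L \<subseteq> {c..u p}\<close> \<open>\<And>l'. l' \<in> L \<Longrightarrow> l' < l\<close> \<open>u q = l\<close> by fastforce
  with \<open>finite L\<close> obtain f where f: "\<forall>l\<in>L. u (f l) = l \<and> steep_descent u q (f l) \<and>
            (\<forall>l'\<in>L. l' \<le> l \<longrightarrow> steep_descent u (f l) (f l'))"
    using insert.IH by blast
  have "l \<notin> L"
    using \<open>\<And>l'. l' \<in> L \<Longrightarrow> l' < l\<close> by blast
  show ?case
  proof (intro exI ballI conjI impI)
    fix l1 assume l1: "l1 \<in> insert l L"
    show "u ((f(l := q)) l1) = l1"
      using l1 f \<open>u q = l\<close> by auto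
    show "steep_descent u p ((f(l := q)) l1)"
      using l1 f pq steep_descent_trans[OF pq] by auto
    fix l2 assume l2: "l2 \<in> insert l L" "l2 \<le> l1"
    show "steep_descent u ((f(l := q)) l1) ((f(l := q)) l2)"
    proof (cases "l1 = l")
      case True
      then show ?thesis
        using l2 f \<open>l \<notin> L\<close> steep_descent_refl by (cases "l2 = l") auto
    next
      case False
      then have "l1 \<in> L" "l2 \<in> L" "l2 \<noteq> l"
        using l1 l2 \<open>\<And>l'. l' \<in> L \<Longrightarrow> l' < l\<close> by fastforce+
      then show ?thesis
        using f False l2(2) by simp
    qed
  qed
qed

lemma compact_UNIV_fun:
  assumes "compact (UNIV :: 'a::topological_space set)"
  shows "compact (UNIV :: ('b \<Rightarrow> 'a) set)"
proof -
  have "compact_space (euclidean :: 'a topology)"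
    using assms by (simp add: compact_space_def)
  then have "compact_space (product_topology (\<lambda>_::'b. euclidean :: 'a topology) UNIV)"
    by (simp add: compact_space_product_topology)
  then show ?thesis
    by (simp add: euclidean_product_topology compact_space_def)
qed

lemma exists_steep_descent_path:
  fixes u :: "'a::metric_space \<Rightarrow> real"
  assumes "compact (UNIV :: 'a set)" "continuous_on UNIV u"
    and "\<And>b. c < u b \<Longrightarrow> 1 \<le> local_slope UNIV u b"
    and "c \<le> u a"
  shows "\<exists>f. 2-lipschitz_on {c..u a} f \<and> f (u a) = a \<and> u (f c) = c"
proof -
  define I where "I = {c..u a} \<times> {c..u a}"
  define A where "A = (\<lambda>(l, l'). {f. f (u a) = a \<and> u (f l) = l \<and>
      (l' \<le> l \<longrightarrow> steep_descent u (f l) (f l'))})"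
  have eval: "continuous_on UNIV (\<lambda>f::real \<Rightarrow> 'a. f l)" for l
    by simp
  have "UNIV \<inter> (\<Inter>i\<in>I. A i) \<noteq> {}"
  proof (rule compact_imp_fip_image[OF compact_UNIV_fun[OF assms(1)]])
    fix i assume "i \<in> I"
    show "closed (A i)"
      unfolding A_def case_prod_beta steep_descent_def using assms(2)
      by (intro closed_Collect_conj closed_Collect_eq closed_Collect_imp closed_Collect_le
          continuous_intros continuous_on_compose2[OF assms(2) eval]) auto
  next
    fix J assume "finite J" "J \<subseteq> I"
    define L where "L = insert (u a) (fst ` J \<union> snd ` J)"
    have "finite L" "L \<subseteq> {c..u a}"
      using \<open>finite J\<close> \<open>J \<subseteq> I\<close> assms(4) by (auto simp: L_def I_def)
    then obtain f where f: "\<forall>l\<in>L. u (f l) = l \<and> steep_descent u a (f l) \<and>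
            (\<forall>l'\<in>L. l' \<le> l \<longrightarrow> steep_descent u (f l) (f l'))"
      using finite_steep_descent_chain[OF assms(1-3)] by blast
    have "u a \<in> L"
      by (simp add: L_def)
    with f have "f (u a) = a"
      using steep_descent_level_eq by metis
    have "f \<in> A i" if "i \<in> J" for i
    proof -
      obtain l l' where i: "i = (l, l')"
        by fastforce
      have "l \<in> L" "l' \<in> L"
        using that by (force simp: L_def i)+
      then show ?thesis
        using f \<open>f (u a) = a\<close> by (auto simp: A_def i)
    qed
    then show "UNIV \<inter> (\<Inter>i\<in>J. A i) \<noteq> {}"
      by blast
  qed
  then obtain f where f: "\<And>i. i \<in> I \<Longrightarrow> f \<in> A i"
    by blast
  show ?thesis
  proof (intro exI conjI)
    show "2-lipschitz_on {c..u a} f"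
    proof (rule lipschitz_on_leI)
      fix l' l assume "l' \<in> {c..u a}" "l \<in> {c..u a}" "l' \<le> l"
      then show "dist (f l') (f l) \<le> 2 * dist l' l"
        using f[of "(l, l')"] f[of "(l', l')"]
        by (auto simp: I_def A_def steep_descent_def dist_real_def dist_commute)
    qed simp
    show "f (u a) = a" "u (f c) = c"
      using f[of "(c, c)"] assms(4) by (auto simp: I_def A_def)
  qed
qed

lemma intrinsic_dist_le_of_local_slope_ge_one:
  fixes u :: "'a::metric_space \<Rightarrow> real"
  assumes "compact (UNIV :: 'a set)" "continuous_on UNIV u" "u x = 0"
    and slope: "\<And>b. b \<noteq> x \<Longrightarrow> 1 \<le> local_slope UNIV u b"
  shows "intrinsic_dist a b \<le> 2 * (u a + u b)"
proof -
  obtain m where m: "\<And>y. u m \<le> u y"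
    using continuous_attains_inf[OF assms(1) _ assms(2)] by auto
  have minimiser: "y = x" if "\<And>z. u y \<le> u z" for y
  proof (rule ccontr)
    assume "y \<noteq> x"
    then obtain z where "u z < u y"
      using local_slope_pos_imp_ex_lower[of u y] order.strict_trans2[OF _ slope[of y]] by auto
    with that[of z] show False
      by simp
  qed
  have "m = x"
    using minimiser m by blast
  then have u_nonneg: "0 \<le> u y" for y
    using m assms(3) by metis
  have slope_pos: "1 \<le> local_slope UNIV u b" if "0 < u b" for b
    using slope[of b] that assms(3) by (cases "b = x") auto
  have to_x: "intrinsic_dist p x \<le> 2 * u p \<and> intrinsic_dist x p \<le> 2 * u p" for p
  proof -
    obtain f where f: "2-lipschitz_on {0..u p} f" "f (u p) = p" "u (f 0) = 0"
      using exists_steep_descent_path[OF assms(1,2) slope_pos u_nonneg[of p]]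
      by blast
    have "f 0 = x"
      using minimiser[of "f 0"] f(3) u_nonneg by simp
    then show ?thesis
      using intrinsic_dist_le_lipschitz_arc[OF f(1) u_nonneg] f(2) by simp
  qed
  have "intrinsic_dist a b \<le> intrinsic_dist a x + intrinsic_dist x b"
    by (rule intrinsic_dist_triangle)
  also have "\<dots> \<le> ereal (2 * u a) + ereal (2 * u b)"
    using to_x by (intro add_mono) auto
  finally show ?thesis
    by (simp add: distrib_left)
qed

section \<open>The \<open>E\<^sub>1\<^sub>,\<^sub>0\<close>-property\<close>

lemma E10_propertyD:
  assumes "E10_property TYPE('a::metric_space)" "open \<Omega>" "\<Omega> \<noteq> {}" "\<Omega> \<noteq> (UNIV :: 'a set)"
  obtains u where "continuous_on (closure \<Omega>) u" "\<And>x. x \<in> \<Omega> \<Longrightarrow> local_slope (closure \<Omega>) u x = 1"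
    "\<And>x. x \<in> frontier \<Omega> \<Longrightarrow> u x = 0"
proof -
  have "\<exists>u. continuous_on (closure \<Omega>) u \<and> (\<forall>x\<in>\<Omega>. local_slope (closure \<Omega>) u x = 1) \<and>
      (\<forall>x\<in>frontier \<Omega>. u x = 0)"
    using assms unfolding E10_property_def by simp
  then show thesis
    using that by blast
qed

lemma E10_property_islimpt:
  assumes "E10_property TYPE('a::metric_space)" "UNIV \<noteq> {z::'a}"
  shows "z islimpt UNIV"
proof (rule ccontr)
  assume "\<not> z islimpt UNIV"
  then have "open {z}"
    by (simp add: islimpt_UNIV_iff)
  then obtain u where "local_slope (closure {z}) u z = 1"
    using E10_propertyD[OF assms(1)] assms(2) by (metis insert_not_empty singletonI)
  moreover have "at z within closure {z} = bot"
    by (simp add: at_within_eq_bot_iff)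
  ultimately show False
    by (simp add: local_slope_def)
qed

lemma E10_property_unit_slope_function:
  assumes "E10_property TYPE('a::metric_space)" "UNIV \<noteq> {x::'a}"
  shows "\<exists>u. continuous_on UNIV u \<and> u x = 0 \<and> (\<forall>b. b \<noteq> x \<longrightarrow> local_slope UNIV u b = 1)"
proof -
  have "x islimpt - {x}"
    using E10_property_islimpt[OF assms] islimpt_punctured[of x UNIV] by (simp add: Compl_eq_Diff_UNIV)
  then have closure: "closure (- {x}) = UNIV"
    by (auto simp: closure_def)
  then have frontier: "frontier (- {x}) = {x}"
    by (auto simp: frontier_def interior_open open_Compl)
  have "- {x} \<noteq> {}" "- {x} \<noteq> UNIV"
    using assms(2) by auto
  then obtain u where "continuous_on (closure (- {x})) u"
    "\<And>b. b \<in> - {x} \<Longrightarrow> local_slope (closure (- {x})) u b = 1" "\<And>b. b \<in> frontier (- {x}) \<Longrightarrow> u b = 0"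
    using E10_propertyD[OF assms(1) open_Compl[OF closed_singleton]] by metis
  then show ?thesis
    unfolding closure frontier by auto
qed

lemma E10_property_intrinsic_dist_bound:
  fixes x :: "'a::metric_space"
  assumes "compact (UNIV :: 'a set)" "E10_property TYPE('a)"
  shows "\<exists>u. continuous_on UNIV u \<and> u x = 0 \<and> (\<forall>a b. intrinsic_dist a b \<le> ereal (2 * (u a + u b)))"
proof (cases "UNIV = {x}")
  case True
  then have "intrinsic_dist a b = 0" for a b :: 'a
    using intrinsic_dist_self[of x] by (metis UNIV_I singletonD)
  then show ?thesis
    by (intro exI[of _ "\<lambda>_. 0"]) (simp add: zero_ereal_def)
next
  case False
  then obtain u where u: "continuous_on UNIV u" "u x = 0" "\<And>b. b \<noteq> x \<Longrightarrow> local_slope UNIV u b = 1"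
    using E10_property_unit_slope_function[OF assms(2)] by blast
  then have "intrinsic_dist a b \<le> ereal (2 * (u a + u b))" for a b
    using intrinsic_dist_le_of_local_slope_ge_one[OF assms(1)] by simp
  with u(1,2) show ?thesis
    by blast
qed

theorem proposition5p2:
  assumes "compact (UNIV :: 'a::metric_space set)"
    and "E10_property TYPE('a)"
  shows "(\<forall>x y :: 'a. intrinsic_dist x y < \<infinity>) \<and>
         continuous_on UNIV (\<lambda>p :: 'a \<times> 'a. real_of_ereal (intrinsic_dist (fst p) (snd p)))"
proof -
  note bound = E10_property_intrinsic_dist_bound[OF assms]
  have finite: "intrinsic_dist a b < \<infinity>" for a b :: 'a
  proof -
    obtain u where "intrinsic_dist a b \<le> ereal (2 * (u a + u b))"
      using bound[of a] by blast
    then show ?thesis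
      by (rule le_less_trans) simp
  qed
  define D where "D a b = real_of_ereal (intrinsic_dist a b)" for a b :: 'a
  have D: "intrinsic_dist a b = ereal (D a b)" for a b
    using finite[of a b] intrinsic_dist_nonneg[of a b] unfolding D_def by (cases "intrinsic_dist a b") auto
  have "continuous_on UNIV (\<lambda>z. D (fst z) (snd z))"
  proof (rule continuous_on_of_triangle_ineq)
    show "0 \<le> D a b" "D a c \<le> D a b + D b c" for a b c
      using intrinsic_dist_nonneg[of a b] intrinsic_dist_triangle[of a c b] unfolding D by simp_all
    fix x
    obtain u where u: "continuous_on UNIV u" "u x = 0" "\<And>a b. D a b \<le> 2 * (u a + u b)"
      using bound[of x] unfolding D by auto
    have "isCont u x"
      using u(1) continuous_on_eq_continuous_at open_UNIV by blast
    then have "isCont (\<lambda>p. 2 * u p) x"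
      by (rule continuous_mult[OF continuous_const])
    moreover have "D p x \<le> 2 * u p \<and> D x p \<le> 2 * u p" for p
      using u(3)[of p x] u(3)[of x p] u(2) by simp
    ultimately show "\<exists>v. isCont v x \<and> v x = 0 \<and> (\<forall>p. D p x \<le> v p \<and> D x p \<le> v p)"
      using u(2) by (intro exI[of _ "\<lambda>p. 2 * u p"]) simp
  qed
  with finite show ?thesis
    unfolding D_def by blast
qed

end
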